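(* Let $X$ be a set and $\sqsubseteq$ a binary relation on pairs of finite subsets of $X$ satisfying: ($\iota_0$) $\emptyset\not\sqsubseteq\emptyset$; ($\iota_1$) $a\sqsubseteq b$, $a\subseteq a'$, $b\subseteq b'$ imply $a'\sqsubseteq b'$; ($\iota_2$) $\{p\}\sqsubseteq\{q\}$ and $\{q\}\sqsubseteq\{p\}$ hold iff $p=q$; ($\iota_3$) $(a_0\cup\{p\})\sqsubseteq b_0$ and $a_1\sqsubseteq(b_1\cup\{p\})$ imply $(a_0\cup a_1)\sqsubseteq(b_0\cup b_1)$. Regard $\mathbf{X}=(X,\sqsubseteq)$ as a structure in the language $\{I_{n,m}\}_{n,m\in\mathbb N}$ by letting $I_{n,m}(s_0,\dots,s_{n-1},t_0,\dots,t_{m-1})$ hold iff $\{s_0,\dots,s_{n-1}\}\sqsubseteq\{t_0,\dots,t_{m-1}\}$. Then $\mathbf{X}$ is $\mathbf{I}$-separated.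
   Context: $\mathbf{I}$ is the structure with universe $\{0,1\}$ and, for all $n,m\in\mathbb N$ (including $0$), an $(n+m)$-ary relation $I_{n,m}$ given by $I_{n,m}(a_0,\dots,a_{n-1},b_0,\dots,b_{m-1})\iff \min_{i<n}a_i\le\max_{j<m}b_j$, with $\min\emptyset=1$, $\max\emptyset=0$. A structure is $\mathbf{I}$-separated if it embeds (injective homomorphism preserving and reflecting all relations) into some power of $\mathbf{I}$. *)

theory Defs
  imports Main
begin

text \<open>The structure I: universe {0,1}, rendered as bool with False = 0 < True = 1.
  A pair of lists (as, bs) with length as = n, length bs = m represents a tuple for I_{n,m}.
  min over empty = 1 and max over empty = 0, so I_{n,m}(a,b) holds iff
  (all a_i = 1) implies (some b_j = 1).\<close>
definition I_rel :: "bool list \<Rightarrow> bool list \<Rightarrow> bool" where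
  "I_rel as bs \<longleftrightarrow> ((\<forall>a\<in>set as. a) \<longrightarrow> (\<exists>b\<in>set bs. b))"

text \<open>A structure in the language {I_{n,m}} with universe X is given by a predicate
  rel on pairs of lists over X (the arities n, m are the lengths of the lists).\<close>
definition embeds_in_I_power ::
  "'a set \<Rightarrow> ('a list \<Rightarrow> 'a list \<Rightarrow> bool) \<Rightarrow> 'k set \<Rightarrow> ('a \<Rightarrow> 'k \<Rightarrow> bool) \<Rightarrow> bool" where
  "embeds_in_I_power X rel K e \<longleftrightarrow>
     (\<forall>x\<in>X. \<forall>y\<in>X. (\<forall>k\<in>K. e x k = e y k) \<longrightarrow> x = y) \<and>
     (\<forall>s t. set s \<subseteq> X \<longrightarrow> set t \<subseteq> X \<longrightarrow>
        (rel s t \<longleftrightarrow> (\<forall>k\<in>K. I_rel (map (\<lambda>x. e x k) s) (map (\<lambda>x. e x k) t))))"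

text \<open>Every coordinate of such an embedding
  is a map X \<rightarrow> {0,1}, i.e. determined by a subset of X, so without loss of generality the
  index set can be taken to be a set of subsets of X (type 'a set).\<close>
definition I_separated :: "'a set \<Rightarrow> ('a list \<Rightarrow> 'a list \<Rightarrow> bool) \<Rightarrow> bool" where
  "I_separated X rel \<longleftrightarrow> (\<exists>(K::'a set set) e. embeds_in_I_power X rel K e)"

end

theory Submission
  imports Defs
begin

text \<open>Read \<open>R a b\<close> as a multiple-conclusion sequent \<open>a \<turnstile> b\<close>; then \<open>\<iota>\<^sub>1\<close>, \<open>\<iota>\<^sub>3\<close> and one
  direction of \<open>\<iota>\<^sub>2\<close> are weakening, cut and identity. A coordinate of an embedding into a power
  of \<open>I\<close> is the indicator of a set \<open>k\<close> such that \<open>c \<subseteq> k\<close> and \<open>c \<turnstile> d\<close> force \<open>d\<close> to meet \<open>k\<close>.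
  By Zorn's lemma every underivable sequent \<open>a \<turnstile> b\<close> extends to a maximal pair \<open>(A, B)\<close>
  containing no derivable finite sequent, and cut makes it a partition of \<open>X\<close>; its left part \<open>A\<close>
  is such a set \<open>k\<close> separating \<open>a\<close> from \<open>b\<close>.\<close>

definition consistent_pair :: "'a set \<Rightarrow> ('a set \<Rightarrow> 'a set \<Rightarrow> bool) \<Rightarrow> 'a set \<Rightarrow> 'a set \<Rightarrow> bool"
  where "consistent_pair X R A B \<longleftrightarrow> A \<subseteq> X \<and> B \<subseteq> X \<and>
           (\<forall>c d. finite c \<longrightarrow> finite d \<longrightarrow> c \<subseteq> A \<longrightarrow> d \<subseteq> B \<longrightarrow> \<not> R c d)"

definition I_hom_indicator :: "'a set \<Rightarrow> ('a set \<Rightarrow> 'a set \<Rightarrow> bool) \<Rightarrow> 'a set \<Rightarrow> bool"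
  where "I_hom_indicator X R k \<longleftrightarrow>
           (\<forall>c d. finite c \<longrightarrow> finite d \<longrightarrow> c \<subseteq> X \<longrightarrow> d \<subseteq> X \<longrightarrow> c \<subseteq> k \<longrightarrow> R c d \<longrightarrow> d \<inter> k \<noteq> {})"

lemma I_rel_map_indicator:
  "I_rel (map (\<lambda>x. x \<in> k) s) (map (\<lambda>x. x \<in> k) t) \<longleftrightarrow> (set s \<subseteq> k \<longrightarrow> set t \<inter> k \<noteq> {})"
  unfolding I_rel_def by auto

lemma vimage_Inl_Plus [simp]: "Inl -` (A <+> B) = A"
  and vimage_Inr_Plus [simp]: "Inr -` (A <+> B) = B"
  by auto

lemma consistent_pairD:
  "consistent_pair X R A B \<Longrightarrow> finite c \<Longrightarrow> finite d \<Longrightarrow> c \<subseteq> A \<Longrightarrow> d \<subseteq> B \<Longrightarrow> \<not> R c d"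
  unfolding consistent_pair_def by blast

lemma not_consistent_pairE:
  assumes "\<not> consistent_pair X R A B" "A \<subseteq> X" "B \<subseteq> X"
  obtains c d where "finite c" "finite d" "c \<subseteq> A" "d \<subseteq> B" "R c d"
  using assms unfolding consistent_pair_def by auto

lemma consistent_pair_Union_chain:
  assumes "\<C> \<noteq> {}" and chain: "subset.chain \<A> \<C>"
    and members: "\<And>S. S \<in> \<C> \<Longrightarrow> consistent_pair X R (Inl -` S) (Inr -` S)"
  shows "consistent_pair X R (Inl -` \<Union>\<C>) (Inr -` \<Union>\<C>)"
  unfolding consistent_pair_def
proof (intro conjI allI impI)
  show "Inl -` \<Union>\<C> \<subseteq> X" "Inr -` \<Union>\<C> \<subseteq> X"
    using members unfolding consistent_pair_def vimage_Union by blast+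
  fix c d assume "finite c" "finite d" "c \<subseteq> Inl -` \<Union>\<C>" "d \<subseteq> Inr -` \<Union>\<C>"
  then have "finite (c <+> d)" "c <+> d \<subseteq> \<Union>\<C>"
    by auto
  then obtain S where "S \<in> \<C>" "c <+> d \<subseteq> S"
    using finite_subset_Union_chain[OF _ _ \<open>\<C> \<noteq> {}\<close> chain] by blast
  then have "c \<subseteq> Inl -` S" "d \<subseteq> Inr -` S"
    by auto
  with \<open>finite c\<close> \<open>finite d\<close> show "\<not> R c d"
    by (intro consistent_pairD[OF members[OF \<open>S \<in> \<C>\<close>]]) auto
qed

text \<open>The pair \<open>(A, B)\<close> is encoded as \<open>A <+> B\<close>, so that Zorn's lemma for inclusion applies.\<close>

lemma maximal_consistent_pair_exists:
  assumes "consistent_pair X R a b"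
  obtains A B where "a \<subseteq> A" "b \<subseteq> B" "consistent_pair X R A B"
    "\<And>A' B'. A \<subseteq> A' \<Longrightarrow> B \<subseteq> B' \<Longrightarrow> consistent_pair X R A' B' \<Longrightarrow> A' = A \<and> B' = B"
proof -
  define \<F> where "\<F> = {S. a <+> b \<subseteq> S \<and> consistent_pair X R (Inl -` S) (Inr -` S)}"
  have "a <+> b \<in> \<F>"
    using assms by (simp add: \<F>_def)
  moreover have "\<Union>\<C> \<in> \<F>" if "\<C> \<noteq> {}" "subset.chain \<F> \<C>" for \<C>
  proof -
    have members: "a <+> b \<subseteq> S" "consistent_pair X R (Inl -` S) (Inr -` S)" if "S \<in> \<C>" for S
      using \<open>subset.chain \<F> \<C>\<close> that unfolding subset_chain_def \<F>_def by blast+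
    then have "a <+> b \<subseteq> \<Union>\<C>"
      using \<open>\<C> \<noteq> {}\<close> by blast
    moreover have "consistent_pair X R (Inl -` \<Union>\<C>) (Inr -` \<Union>\<C>)"
      using consistent_pair_Union_chain[OF that members(2)] .
    ultimately show ?thesis
      by (simp add: \<F>_def)
  qed
  ultimately obtain M where "M \<in> \<F>" and maximal: "\<And>S. S \<in> \<F> \<Longrightarrow> M \<subseteq> S \<Longrightarrow> S = M"
    using subset_Zorn_nonempty[of \<F>] by blast
  then have "a <+> b \<subseteq> M" and cons: "consistent_pair X R (Inl -` M) (Inr -` M)"
    by (simp_all add: \<F>_def)
  have "a \<subseteq> Inl -` M" "b \<subseteq> Inr -` M"
    using \<open>a <+> b \<subseteq> M\<close> by auto
  moreover note cons
  moreover have "A' = Inl -` M \<and> B' = Inr -` M"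
    if A': "Inl -` M \<subseteq> A'" and B': "Inr -` M \<subseteq> B'" and "consistent_pair X R A' B'" for A' B'
  proof -
    have "A' <+> B' \<in> \<F>"
      using that \<open>a \<subseteq> Inl -` M\<close> \<open>b \<subseteq> Inr -` M\<close> unfolding \<F>_def by auto
    moreover have "M \<subseteq> A' <+> B'"
    proof
      fix x assume "x \<in> M"
      with A' B' show "x \<in> A' <+> B'"
        by (cases x) auto
    qed
    ultimately have "A' <+> B' = M"
      by (rule maximal)
    then show ?thesis
      by (metis vimage_Inl_Plus vimage_Inr_Plus)
  qed
  ultimately show thesis
    by (rule that)
qed

locale sequent_relation =
  fixes X :: "'a set" and R :: "'a set \<Rightarrow> 'a set \<Rightarrow> bool"
  assumes identity: "\<And>p. p \<in> X \<Longrightarrow> R {p} {p}"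
    and weakening: "\<And>a b a' b'. finite a' \<Longrightarrow> finite b' \<Longrightarrow> a' \<subseteq> X \<Longrightarrow> b' \<subseteq> X \<Longrightarrow>
                  R a b \<Longrightarrow> a \<subseteq> a' \<Longrightarrow> b \<subseteq> b' \<Longrightarrow> R a' b'"
    and cut: "\<And>a0 b0 a1 b1 p. finite a0 \<Longrightarrow> finite b0 \<Longrightarrow> finite a1 \<Longrightarrow> finite b1 \<Longrightarrow>
                  a0 \<subseteq> X \<Longrightarrow> b0 \<subseteq> X \<Longrightarrow> a1 \<subseteq> X \<Longrightarrow> b1 \<subseteq> X \<Longrightarrow> p \<in> X \<Longrightarrow>
                  R (a0 \<union> {p}) b0 \<Longrightarrow> R a1 (b1 \<union> {p}) \<Longrightarrow> R (a0 \<union> a1) (b0 \<union> b1)"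
begin

lemma consistent_pair_of_not_R:
  assumes "finite a" "finite b" "a \<subseteq> X" "b \<subseteq> X" "\<not> R a b"
  shows "consistent_pair X R a b"
  unfolding consistent_pair_def
proof (intro conjI allI impI notI)
  fix c d assume "finite c" "finite d" "c \<subseteq> a" "d \<subseteq> b" "R c d"
  then show False
    using weakening[OF assms(1-4) \<open>R c d\<close>] \<open>\<not> R a b\<close> by blast
qed (use assms in auto)

lemma consistent_pair_insert:
  assumes cons: "consistent_pair X R A B" and "p \<in> X"
  shows "consistent_pair X R (insert p A) B \<or> consistent_pair X R A (insert p B)"
proof (rule ccontr)
  assume neither: "\<not> (consistent_pair X R (insert p A) B \<or> consistent_pair X R A (insert p B))"
  have AX: "A \<subseteq> X" and BX: "B \<subseteq> X"
    using cons by (simp_all add: consistent_pair_def)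
  obtain c d where cd: "finite c" "finite d" "c \<subseteq> insert p A" "d \<subseteq> B" "R c d"
    by (rule not_consistent_pairE[of X R "insert p A" B]) (use neither AX BX \<open>p \<in> X\<close> in auto)
  obtain c' d' where cd': "finite c'" "finite d'" "c' \<subseteq> A" "d' \<subseteq> insert p B" "R c' d'"
    by (rule not_consistent_pairE[of X R A "insert p B"]) (use neither AX BX \<open>p \<in> X\<close> in auto)
  have left: "R ((c - {p}) \<union> {p}) d"
    by (rule weakening[OF _ _ _ _ \<open>R c d\<close>]) (use cd AX BX \<open>p \<in> X\<close> in auto)
  have right: "R c' ((d' - {p}) \<union> {p})"
    by (rule weakening[OF _ _ _ _ \<open>R c' d'\<close>]) (use cd' AX BX \<open>p \<in> X\<close> in auto)
  have "R ((c - {p}) \<union> c') (d \<union> (d' - {p}))"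
    by (rule cut[OF _ _ _ _ _ _ _ _ \<open>p \<in> X\<close> left right]) (use cd cd' AX BX in auto)
  moreover have "\<not> R ((c - {p}) \<union> c') (d \<union> (d' - {p}))"
    by (rule consistent_pairD[OF cons]) (use cd cd' in auto)
  ultimately show False
    by contradiction
qed

lemma consistent_pair_extends_to_partition:
  assumes "consistent_pair X R a b"
  obtains A B where "a \<subseteq> A" "b \<subseteq> B" "A \<union> B = X" "consistent_pair X R A B"
proof -
  obtain A B where "a \<subseteq> A" "b \<subseteq> B" and cons: "consistent_pair X R A B"
    and maximal: "\<And>A' B'. A \<subseteq> A' \<Longrightarrow> B \<subseteq> B' \<Longrightarrow> consistent_pair X R A' B' \<Longrightarrow> A' = A \<and> B' = B"
    using maximal_consistent_pair_exists[OF assms] by blast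
  have "p \<in> A \<union> B" if "p \<in> X" for p
    using consistent_pair_insert[OF cons that] maximal[of "insert p A" B] maximal[of A "insert p B"]
    by blast
  moreover have "A \<union> B \<subseteq> X"
    using cons by (simp add: consistent_pair_def)
  ultimately have "A \<union> B = X"
    by blast
  with \<open>a \<subseteq> A\<close> \<open>b \<subseteq> B\<close> show thesis
    using cons by (rule that)
qed

lemma I_hom_indicator_separates:
  assumes "finite a" "finite b" "a \<subseteq> X" "b \<subseteq> X" "\<not> R a b"
  obtains k where "I_hom_indicator X R k" "a \<subseteq> k" "b \<inter> k = {}"
proof -
  obtain A B where "a \<subseteq> A" "b \<subseteq> B" "A \<union> B = X" and cons: "consistent_pair X R A B"
    using consistent_pair_extends_to_partition[OF consistent_pair_of_not_R[OF assms]] by blast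
  have "A \<inter> B = {}"
  proof (rule equals0I)
    fix p assume "p \<in> A \<inter> B"
    then have "\<not> R {p} {p}"
      using consistent_pairD[OF cons] by simp
    with \<open>p \<in> A \<inter> B\<close> \<open>A \<union> B = X\<close> show False
      using identity by blast
  qed
  have "I_hom_indicator X R A"
    unfolding I_hom_indicator_def
  proof (intro allI impI notI)
    fix c d assume "finite c" "finite d" "c \<subseteq> X" "d \<subseteq> X" "c \<subseteq> A" "R c d" "d \<inter> A = {}"
    moreover from \<open>d \<subseteq> X\<close> \<open>d \<inter> A = {}\<close> \<open>A \<union> B = X\<close> have "d \<subseteq> B"
      by blast
    ultimately show False
      using consistent_pairD[OF cons, of c d] by blast
  qed
  with \<open>a \<subseteq> A\<close> \<open>b \<subseteq> B\<close> \<open>A \<inter> B = {}\<close> show thesis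
    using that by blast
qed

lemma R_iff_I_hom_indicators:
  assumes "finite a" "finite b" "a \<subseteq> X" "b \<subseteq> X"
  shows "R a b \<longleftrightarrow> (\<forall>k. I_hom_indicator X R k \<longrightarrow> a \<subseteq> k \<longrightarrow> b \<inter> k \<noteq> {})"
proof
  assume "R a b"
  with assms show "\<forall>k. I_hom_indicator X R k \<longrightarrow> a \<subseteq> k \<longrightarrow> b \<inter> k \<noteq> {}"
    unfolding I_hom_indicator_def by blast
next
  assume indicators: "\<forall>k. I_hom_indicator X R k \<longrightarrow> a \<subseteq> k \<longrightarrow> b \<inter> k \<noteq> {}"
  show "R a b"
  proof (rule ccontr)
    assume "\<not> R a b"
    then obtain k where "I_hom_indicator X R k" "a \<subseteq> k" "b \<inter> k = {}"
      using I_hom_indicator_separates[OF assms] by blast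
    with indicators show False
      by blast
  qed
qed

end

theorem mainTheorem7:
  fixes X :: "'a set" and R :: "'a set \<Rightarrow> 'a set \<Rightarrow> bool"
  assumes iota0: "\<not> R {} {}"
    and iota1: "\<And>a b a' b'. finite a' \<Longrightarrow> finite b' \<Longrightarrow> a' \<subseteq> X \<Longrightarrow> b' \<subseteq> X \<Longrightarrow>
                  R a b \<Longrightarrow> a \<subseteq> a' \<Longrightarrow> b \<subseteq> b' \<Longrightarrow> R a' b'"
    and iota2: "\<And>p q. p \<in> X \<Longrightarrow> q \<in> X \<Longrightarrow> (R {p} {q} \<and> R {q} {p} \<longleftrightarrow> p = q)"
    and iota3: "\<And>a0 b0 a1 b1 p. finite a0 \<Longrightarrow> finite b0 \<Longrightarrow> finite a1 \<Longrightarrow> finite b1 \<Longrightarrow>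
                  a0 \<subseteq> X \<Longrightarrow> b0 \<subseteq> X \<Longrightarrow> a1 \<subseteq> X \<Longrightarrow> b1 \<subseteq> X \<Longrightarrow> p \<in> X \<Longrightarrow>
                  R (a0 \<union> {p}) b0 \<Longrightarrow> R a1 (b1 \<union> {p}) \<Longrightarrow> R (a0 \<union> a1) (b0 \<union> b1)"
  shows "I_separated X (\<lambda>s t. R (set s) (set t))"
proof -
  interpret sequent_relation X R
  proof
    show "R {p} {p}" if "p \<in> X" for p
      using iota2[OF that that] by simp
  qed (fact iota1 iota3)+
  define K where "K = {k. I_hom_indicator X R k}"
  have R_iff: "R a b \<longleftrightarrow> (\<forall>k\<in>K. a \<subseteq> k \<longrightarrow> b \<inter> k \<noteq> {})"
    if "finite a" "finite b" "a \<subseteq> X" "b \<subseteq> X" for a b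
    using R_iff_I_hom_indicators[OF that] by (simp add: K_def)
  have "embeds_in_I_power X (\<lambda>s t. R (set s) (set t)) K (\<lambda>x k. x \<in> k)"
    unfolding embeds_in_I_power_def I_rel_map_indicator
  proof (intro conjI ballI allI impI)
    fix x y assume "x \<in> X" "y \<in> X" and "\<forall>k\<in>K. (x \<in> k) = (y \<in> k)"
    then have "R {x} {y}" "R {y} {x}"
      using R_iff[of "{x}" "{y}"] R_iff[of "{y}" "{x}"] by auto
    with iota2[OF \<open>x \<in> X\<close> \<open>y \<in> X\<close>] show "x = y"
      by blast
  qed (simp add: R_iff)
  then show ?thesis
    unfolding I_separated_def by blast
qed

end
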